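(* Let $D$ be an antimatter domain. Then $D$ is a GL-domain if and only if the polynomial ring $D[X]$ is a completely atomic domain.
   Context: An atom (irreducible element) of an integral domain is a nonzero nonunit $a$ such that $a=bc$ implies $b$ or $c$ is a unit. A domain is antimatter if it has no atoms. A nonzero nonunit is atomic if it is a finite product of atoms; a domain is completely atomic if every nonunit divisor of an atomic element is atomic. A nonzero polynomial $f\in D[X]$ is primitive if the only common divisors in $D$ of its coefficients are units. $D$ is a GL-domain if the product of any two primitive polynomials in $D[X]$ is primitive. *)

theory Defs
  imports "HOL-Computational_Algebra.Polynomial" "HOL-Computational_Algebra.Factorial_Ring"
begin

text \<open>Atoms are the library notion irreducible (nonzero nonunit, any factorisation has a unit factor).\<close>

definition antimatter_domain :: "'a::idom itself \<Rightarrow> bool" where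
  "antimatter_domain _ \<longleftrightarrow> (\<nexists>a::'a. irreducible a)"

definition atomic_elem :: "'a::idom \<Rightarrow> bool" where
  "atomic_elem a \<longleftrightarrow> a \<noteq> 0 \<and> \<not> a dvd 1 \<and>
     (\<exists>xs. xs \<noteq> [] \<and> (\<forall>x\<in>set xs. irreducible x) \<and> a = prod_list xs)"

definition completely_atomic :: "'a::idom itself \<Rightarrow> bool" where
  "completely_atomic _ \<longleftrightarrow>
     (\<forall>a b::'a. atomic_elem a \<and> b dvd a \<and> \<not> b dvd 1 \<longrightarrow> atomic_elem b)"

definition primitive_poly :: "'a::idom poly \<Rightarrow> bool" where
  "primitive_poly f \<longleftrightarrow> f \<noteq> 0 \<and> (\<forall>d::'a. (\<forall>i. d dvd coeff f i) \<longrightarrow> d dvd 1)"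

definition GL_domain :: "'a::idom itself \<Rightarrow> bool" where
  "GL_domain _ \<longleftrightarrow>
     (\<forall>f g :: 'a poly. primitive_poly f \<and> primitive_poly g \<longrightarrow> primitive_poly (f * g))"

end

theory Submission
  imports Defs
begin

text \<open>Over an antimatter domain every irreducible polynomial is nonconstant, and a constant factor
  of it would have to be a unit, so irreducible polynomials are primitive. Conversely, a primitive
  nonunit polynomial splits into primitive nonunit factors of positive degree, so by induction on
  the degree it is atomic. Hence the atomic elements of \<open>D[X]\<close> are exactly the products of
  primitive irreducibles, and \<open>D[X]\<close> is completely atomic precisely when these products are
  primitive, i.e. when \<open>D\<close> is a GL-domain: a nonunit constant divisor of an atomic polynomial
  can never be atomic.\<close>

lemma primitive_poly_iff_const_dvd:
  "primitive_poly f \<longleftrightarrow> f \<noteq> 0 \<and> (\<forall>d. [:d:] dvd f \<longrightarrow> d dvd 1)"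
  by (simp add: primitive_poly_def const_poly_dvd_iff)

lemma primitive_poly_dvd:
  assumes "primitive_poly f" "g dvd f"
  shows "primitive_poly g"
proof -
  have "g \<noteq> 0" using assms by (auto simp: primitive_poly_def)
  moreover have "d dvd 1" if "[:d:] dvd g" for d
    using assms dvd_trans[OF that assms(2)] by (simp add: primitive_poly_iff_const_dvd)
  ultimately show ?thesis by (simp add: primitive_poly_iff_const_dvd)
qed

lemma primitive_poly_is_unit_iff:
  assumes "primitive_poly f"
  shows "f dvd 1 \<longleftrightarrow> degree f = 0"
proof
  assume "degree f = 0"
  then obtain c where c: "f = [:c:]" by (rule degree_eq_zeroE)
  then have "c dvd 1" using assms by (simp add: primitive_poly_iff_const_dvd)
  then show "f dvd 1" using c by (simp add: is_unit_const_poly_iff)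
qed (auto elim: is_unit_polyE)

lemma atomic_elem_irreducible: "irreducible a \<Longrightarrow> atomic_elem a"
  unfolding atomic_elem_def by (intro conjI exI[of _ "[a]"]) (auto simp: irreducible_not_unit)

lemma atomic_elem_mult:
  assumes "atomic_elem a" "atomic_elem b"
  shows "atomic_elem (a * b)"
proof -
  obtain xs ys where xs: "xs \<noteq> []" "\<forall>x\<in>set xs. irreducible x" "a = prod_list xs"
    and ys: "\<forall>y\<in>set ys. irreducible y" "b = prod_list ys"
    using assms unfolding atomic_elem_def by metis
  have "a * b \<noteq> 0" "\<not> a * b dvd 1"
    using assms unfolding atomic_elem_def by (auto dest: dvd_mult_left)
  moreover have "a * b = prod_list (xs @ ys)" using xs(3) ys(2) by simp
  ultimately show ?thesis
    unfolding atomic_elem_def using xs(1,2) ys(1) by (intro conjI exI[of _ "xs @ ys"]) auto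
qed

lemma atomic_elem_imp_irreducible_dvd:
  assumes "atomic_elem a"
  obtains p where "irreducible p" "p dvd a"
proof -
  obtain xs where "xs \<noteq> []" "\<forall>x\<in>set xs. irreducible x" "a = prod_list xs"
    using assms unfolding atomic_elem_def by blast
  then show ?thesis using that by (metis prod_list_dvd last_in_set)
qed

lemma atomic_elem_primitive_poly:
  "primitive_poly f \<Longrightarrow> \<not> f dvd 1 \<Longrightarrow> atomic_elem f"
proof (induction "degree f" arbitrary: f rule: less_induct)
  case less
  show ?case
  proof (cases "irreducible f")
    case True
    then show ?thesis by (rule atomic_elem_irreducible)
  next
    case False
    have "f \<noteq> 0" using less.prems by (simp add: primitive_poly_def)
    with False less.prems(2) obtain g h where gh: "f = g * h" "\<not> g dvd 1" "\<not> h dvd 1"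
      unfolding irreducible_def by blast
    have "primitive_poly g" "primitive_poly h"
      using primitive_poly_dvd[OF less.prems(1)] gh(1) by auto
    with gh(2,3) have "degree g > 0" "degree h > 0"
      by (simp_all add: primitive_poly_is_unit_iff)
    moreover have "degree f = degree g + degree h"
      using \<open>f \<noteq> 0\<close> gh(1) by (simp add: degree_mult_eq)
    ultimately have "atomic_elem g" "atomic_elem h"
      using less.hyps \<open>primitive_poly g\<close> \<open>primitive_poly h\<close> gh(2,3) by simp_all
    then show ?thesis using gh(1) by (simp add: atomic_elem_mult)
  qed
qed

lemma antimatter_irreducible_poly_degree_pos:
  assumes "antimatter_domain TYPE('a::idom)" "irreducible (p :: 'a poly)"
  shows "degree p > 0"
proof (rule ccontr)
  assume "\<not> degree p > 0"
  then obtain c where c: "p = [:c:]" by (metis degree_eq_zeroE gr0I)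
  have "irreducible c"
  proof (rule irreducibleI)
    show "c \<noteq> 0" using assms(2) c by auto
    show "\<not> c dvd 1"
      using irreducible_not_unit[OF assms(2)] c by (simp add: is_unit_const_poly_iff)
    show "a dvd 1 \<or> b dvd 1" if "c = a * b" for a b
      using irreducibleD[OF assms(2), of "[:a:]" "[:b:]"] c that
      by (simp add: is_unit_const_poly_iff)
  qed
  then show False using assms(1) unfolding antimatter_domain_def by blast
qed

lemma antimatter_irreducible_poly_primitive:
  assumes "antimatter_domain TYPE('a::idom)" "irreducible (p :: 'a poly)"
  shows "primitive_poly p"
  unfolding primitive_poly_iff_const_dvd
proof (intro conjI allI impI)
  show "p \<noteq> 0" using assms(2) by auto
  fix d :: 'a
  assume "[:d:] dvd p"
  then obtain q where q: "p = [:d:] * q" by blast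
  have "d \<noteq> 0" using q assms(2) by auto
  then have "degree q > 0"
    using antimatter_irreducible_poly_degree_pos[OF assms] q by simp
  then have "\<not> q dvd 1" by (auto elim: is_unit_polyE)
  then show "d dvd 1"
    using irreducibleD[OF assms(2) q] by (simp add: is_unit_const_poly_iff)
qed

lemma antimatter_atomic_poly_degree_pos:
  assumes "antimatter_domain TYPE('a::idom)" "atomic_elem (f :: 'a poly)"
  shows "degree f > 0"
proof -
  obtain p where p: "irreducible p" "p dvd f"
    using assms(2) by (rule atomic_elem_imp_irreducible_dvd)
  have "f \<noteq> 0" using assms(2) by (simp add: atomic_elem_def)
  with p(2) have "degree p \<le> degree f" by (rule dvd_imp_degree_le)
  moreover have "degree p > 0" using antimatter_irreducible_poly_degree_pos[OF assms(1) p(1)] .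
  ultimately show ?thesis by simp
qed

lemma GL_domain_atomic_poly_primitive:
  assumes "antimatter_domain TYPE('a::idom)" "GL_domain TYPE('a)" "atomic_elem (f :: 'a poly)"
  shows "primitive_poly f"
proof -
  have "primitive_poly (prod_list xs)" if "\<forall>x\<in>set xs. primitive_poly x" for xs :: "'a poly list"
    using that
  proof (induction xs)
    case Nil
    show ?case by (simp add: primitive_poly_iff_const_dvd is_unit_const_poly_iff)
  next
    case (Cons x xs)
    then show ?case using assms(2) unfolding GL_domain_def by simp
  qed
  then show ?thesis
    using assms(3) antimatter_irreducible_poly_primitive[OF assms(1)]
    unfolding atomic_elem_def by metis
qed

lemma completely_atomic_atomic_poly_primitive:
  assumes "antimatter_domain TYPE('a::idom)" "completely_atomic TYPE('a poly)"
    and "atomic_elem (f :: 'a poly)"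
  shows "primitive_poly f"
  unfolding primitive_poly_iff_const_dvd
proof (intro conjI allI impI)
  show "f \<noteq> 0" using assms(3) by (simp add: atomic_elem_def)
  fix d :: 'a
  assume "[:d:] dvd f"
  show "d dvd 1"
  proof (rule ccontr)
    assume "\<not> d dvd 1"
    then have "atomic_elem [:d:]"
      using assms(2,3) \<open>[:d:] dvd f\<close> unfolding completely_atomic_def
      by (simp add: is_unit_const_poly_iff)
    then show False using antimatter_atomic_poly_degree_pos[OF assms(1)] by fastforce
  qed
qed

theorem proposition4p1:
  assumes "antimatter_domain TYPE('a::idom)"
  shows "GL_domain TYPE('a) \<longleftrightarrow> completely_atomic TYPE('a poly)"
proof
  assume "GL_domain TYPE('a)"
  then show "completely_atomic TYPE('a poly)"
    unfolding completely_atomic_def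
    using GL_domain_atomic_poly_primitive[OF assms] primitive_poly_dvd atomic_elem_primitive_poly
    by blast
next
  assume completely_atomic: "completely_atomic TYPE('a poly)"
  show "GL_domain TYPE('a)"
    unfolding GL_domain_def
  proof (intro allI impI, elim conjE)
    fix f g :: "'a poly"
    assume f: "primitive_poly f" and g: "primitive_poly g"
    consider "f dvd 1" | "g dvd 1" | "atomic_elem f" "atomic_elem g"
      using f g atomic_elem_primitive_poly by blast
    then show "primitive_poly (f * g)"
    proof cases
      case 1
      then show ?thesis using primitive_poly_dvd[OF g] by (simp add: mult_unit_dvd_iff')
    next
      case 2
      then show ?thesis using primitive_poly_dvd[OF f] by (simp add: mult_unit_dvd_iff)
    next
      case 3
      then show ?thesis
        using completely_atomic_atomic_poly_primitive[OF assms completely_atomic]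
        by (simp add: atomic_elem_mult)
    qed
  qed
qed

end
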